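(* Let $n\in\mathbb{N}$ and assign each vertex $x$ of $K_n$ a weight $w(x)>0$; define the weight of an edge $xy$ as $w(xy):=w(x)w(y)$ and, for a subgraph $H\subseteq K_n$, $w(H):=\sum_{e\in E(H)}w(e)$. Let $S_n:=\sum_{x\in V(K_n)}w(x)$ and $M_n:=\max_{x\in V(K_n)}w(x)$. Then for every $\ell\ge 2$, $$w(K_n)-\max\{w(H): H\subseteq K_n,\ K_\ell\not\subseteq H\}\ \ge\ \frac{S_n}{2}\left(\frac{S_n}{\ell-1}-M_n\right).$$ *)

theory Defs
  imports Complex_Main
begin

definition complete_edges :: "'a set \<Rightarrow> 'a set set" where
  "complete_edges V = {e. \<exists>x y. x \<in> V \<and> y \<in> V \<and> x \<noteq> y \<and> e = {x, y}}"

definition edge_weight :: "('a \<Rightarrow> real) \<Rightarrow> 'a set \<Rightarrow> real" where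
  "edge_weight w e = (\<Prod>x\<in>e. w x)"

definition graph_weight :: "('a \<Rightarrow> real) \<Rightarrow> 'a set set \<Rightarrow> real" where
  "graph_weight w H = (\<Sum>e\<in>H. edge_weight w e)"

definition contains_clique :: "'a set \<Rightarrow> 'a set set \<Rightarrow> nat \<Rightarrow> bool" where
  "contains_clique V H l \<longleftrightarrow>
     (\<exists>K. K \<subseteq> V \<and> finite K \<and> card K = l \<and> (\<forall>x\<in>K. \<forall>y\<in>K. x \<noteq> y \<longrightarrow> {x, y} \<in> H))"

end

theory Submission
  imports Defs "HOL-Analysis.Convex"
begin

text \<open>With \<open>S\<close> the total weight, \<open>2 w(K\<^sub>n) = S\<^sup>2 - \<Sum>w(x)\<^sup>2\<close> and
  \<open>\<Sum>w(x)\<^sup>2 \<le> S M\<close>, so it suffices to prove the weighted Turan bound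
  \<open>2 w(H) \<le> (1 - 1/(\<ell> - 1)) S\<^sup>2\<close> for \<open>K\<^sub>\<ell>\<close>-free \<open>H\<close> (Motzkin-Straus).
  It follows by Zykov symmetrisation: if two vertices are non-adjacent, moving all the weight
  of one of them onto the other, the one of larger weighted degree, does not decrease \<open>w(H)\<close>
  and removes a vertex. Once any two vertices are adjacent, the graph is a clique on at most
  \<open>\<ell> - 1\<close> vertices and the bound is the inequality between arithmetic and quadratic mean.\<close>

definition induced_weight :: "('a \<Rightarrow> real) \<Rightarrow> 'a set set \<Rightarrow> 'a set \<Rightarrow> real" where
  "induced_weight w H V = graph_weight w (H \<inter> complete_edges V)"

definition weighted_degree :: "('a \<Rightarrow> real) \<Rightarrow> 'a set set \<Rightarrow> 'a set \<Rightarrow> 'a \<Rightarrow> real" where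
  "weighted_degree w H U z = (\<Sum>u\<in>U. if {z, u} \<in> H then w u else 0)"

lemma finite_complete_edges: "finite V \<Longrightarrow> finite (complete_edges V)"
  by (rule finite_subset[of _ "Pow V"]) (auto simp: complete_edges_def)

lemma complete_edges_insert:
  assumes "z \<notin> U"
  shows "complete_edges (insert z U) = complete_edges U \<union> (\<lambda>u. {z, u}) ` U"
  using assms unfolding complete_edges_def by (auto simp: insert_commute)

lemma induced_weight_insert:
  assumes fin: "finite U" and z: "z \<notin> U"
  shows "induced_weight w H (insert z U) = induced_weight w H U + w z * weighted_degree w H U z"
proof -
  let ?N = "{u\<in>U. {z, u} \<in> H}"
  have split: "H \<inter> complete_edges (insert z U) = (H \<inter> complete_edges U) \<union> (\<lambda>u. {z, u}) ` ?N"
    using complete_edges_insert[OF z] by auto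
  have disjoint: "(H \<inter> complete_edges U) \<inter> (\<lambda>u. {z, u}) ` ?N = {}"
    using z unfolding complete_edges_def by (auto simp: doubleton_eq_iff)
  have inj: "inj_on (\<lambda>u. {z, u}) ?N"
    using z by (auto simp: inj_on_def doubleton_eq_iff)
  have "induced_weight w H (insert z U)
      = induced_weight w H U + (\<Sum>u\<in>?N. edge_weight w {z, u})"
    unfolding induced_weight_def graph_weight_def split
    using fin finite_complete_edges[OF fin] disjoint
    by (simp add: sum.union_disjoint sum.reindex[OF inj])
  also have "(\<Sum>u\<in>?N. edge_weight w {z, u}) = (\<Sum>u\<in>?N. w z * w u)"
  proof (intro sum.cong refl)
    fix u assume "u \<in> ?N"
    with z have "z \<noteq> u" by auto
    then show "edge_weight w {z, u} = w z * w u" by (simp add: edge_weight_def)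
  qed
  also have "\<dots> = w z * weighted_degree w H U z"
    by (auto simp: weighted_degree_def sum_distrib_left sum.inter_filter[OF fin] intro!: sum.cong)
  finally show ?thesis .
qed

lemma induced_weight_cong:
  assumes "\<And>x. x \<in> V \<Longrightarrow> w x = w' x"
  shows "induced_weight w H V = induced_weight w' H V"
  unfolding induced_weight_def graph_weight_def edge_weight_def
  using assms by (intro sum.cong prod.cong) (auto simp: complete_edges_def)

lemma induced_weight_clique:
  assumes "finite V" and "\<forall>x\<in>V. \<forall>y\<in>V. x \<noteq> y \<longrightarrow> {x, y} \<in> H"
  shows "2 * induced_weight w H V = (\<Sum>x\<in>V. w x)\<^sup>2 - (\<Sum>x\<in>V. (w x)\<^sup>2)"
  using assms
proof (induction V rule: finite_induct)
  case empty
  then show ?case by (simp add: induced_weight_def graph_weight_def complete_edges_def)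
next
  case (insert z U)
  have "weighted_degree w H U z = (\<Sum>u\<in>U. w u)"
    unfolding weighted_degree_def using insert by (intro sum.cong) auto
  with insert show ?case
    by (simp add: induced_weight_insert power2_eq_square algebra_simps)
qed

lemma contains_clique_mono:
  "contains_clique V' H k \<Longrightarrow> V' \<subseteq> V \<Longrightarrow> contains_clique V H k"
  unfolding contains_clique_def by blast

lemma not_contains_clique_empty:
  assumes "l \<ge> 2"
  shows "\<not> contains_clique V {} l"
proof
  assume "contains_clique V {} l"
  then obtain K where "finite K" "card K = l" "\<forall>x\<in>K. \<forall>y\<in>K. x \<noteq> y \<longrightarrow> {x, y} \<in> ({} :: 'a set set)"
    unfolding contains_clique_def by blast
  with assms show False
    by (metis card_le_Suc0_iff_eq empty_iff not_less_eq_eq numeral_2_eq_2)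
qed

lemma card_le_if_clique_free:
  assumes "finite V" and "\<forall>x\<in>V. \<forall>y\<in>V. x \<noteq> y \<longrightarrow> {x, y} \<in> H"
    and "\<not> contains_clique V H (Suc r)"
  shows "card V \<le> r"
proof (rule ccontr)
  assume "\<not> card V \<le> r"
  then obtain K where "K \<subseteq> V" "card K = Suc r"
    using obtain_subset_with_card_n[of "Suc r" V] by auto
  with assms have "contains_clique V H (Suc r)"
    unfolding contains_clique_def by (metis card.infinite nat.distinct(1) subsetD)
  with assms(3) show False by simp
qed

lemma weighted_turan_clique:
  fixes w :: "'a \<Rightarrow> real"
  assumes "finite V" and "\<forall>x\<in>V. \<forall>y\<in>V. x \<noteq> y \<longrightarrow> {x, y} \<in> H"
    and "card V \<le> r"
  shows "2 * induced_weight w H V \<le> (1 - 1 / real r) * (\<Sum>x\<in>V. w x)\<^sup>2"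
proof (cases "V = {}")
  case True
  then show ?thesis by (simp add: induced_weight_def graph_weight_def complete_edges_def)
next
  case False
  let ?S = "(\<Sum>x\<in>V. w x)\<^sup>2"
  have card_pos: "card V > 0" using False assms(1) by (simp add: card_gt_0_iff)
  have "?S / real r \<le> ?S / real (card V)"
    using assms(3) card_pos by (intro divide_left_mono) auto
  also have "\<dots> \<le> (\<Sum>x\<in>V. (w x)\<^sup>2)"
    using sum_squared_le_sum_of_squares[of w V] card_pos by (simp add: divide_le_eq)
  finally show ?thesis
    using induced_weight_clique[OF assms(1,2), of w] by (simp add: algebra_simps)
qed

text \<open>The edges at \<open>b\<close> weigh \<open>w b\<close> times the weighted degree of \<open>b\<close>, which is at most
  what the weight of \<open>b\<close> gains once moved to \<open>a\<close>; as \<open>{a, b} \<notin> H\<close>, no edge is lost.\<close>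
lemma induced_weight_le_merge:
  assumes fin: "finite V" and ab: "a \<in> V" "b \<in> V" "a \<noteq> b" "{a, b} \<notin> H"
    and wb: "w b \<ge> 0"
    and degree: "weighted_degree w H (V - {a, b}) b \<le> weighted_degree w H (V - {a, b}) a"
  shows "induced_weight w H V \<le> induced_weight (w(a := w a + w b)) H (V - {b})"
proof -
  define U where "U = V - {a, b}"
  define w' where "w' = w(a := w a + w b)"
  have finU: "finite U" and notin: "a \<notin> U" "b \<notin> U" using fin by (auto simp: U_def)
  have V_eq: "V = insert a (insert b U)" and V'_eq: "V - {b} = insert a U"
    using ab by (auto simp: U_def)
  have "weighted_degree w H (insert b U) a = weighted_degree w H U a"
    using finU notin ab by (simp add: weighted_degree_def)
  then have "induced_weight w H V
      = induced_weight w H U + w b * weighted_degree w H U b + w a * weighted_degree w H U a"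
    unfolding V_eq using finU notin ab by (simp add: induced_weight_insert)
  also have "\<dots> \<le> induced_weight w H U + (w a + w b) * weighted_degree w H U a"
    using mult_left_mono[OF degree wb] by (simp add: U_def algebra_simps)
  also have "\<dots> = induced_weight w' H (V - {b})"
  proof -
    have "induced_weight w' H U = induced_weight w H U"
      using notin by (intro induced_weight_cong) (auto simp: w'_def)
    moreover have "weighted_degree w' H U a = weighted_degree w H U a"
      unfolding weighted_degree_def using notin by (intro sum.cong) (auto simp: w'_def)
    ultimately show ?thesis
      unfolding V'_eq using finU notin by (simp add: induced_weight_insert w'_def)
  qed
  finally show ?thesis by (simp add: w'_def)
qed

lemma sum_merge_weight:
  fixes w :: "'a \<Rightarrow> 'b::comm_monoid_add"
  assumes "finite V" "a \<in> V" "b \<in> V" "a \<noteq> b"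
  shows "(\<Sum>x\<in>V - {b}. (w(a := w a + w b)) x) = (\<Sum>x\<in>V. w x)"
proof -
  have a: "a \<in> V - {b}" and fin: "finite (V - {b})" using assms by auto
  have "(\<Sum>x\<in>V - {b}. (w(a := w a + w b)) x) = w a + w b + (\<Sum>x\<in>V - {b} - {a}. w x)"
    by (simp add: sum.remove[OF fin a])
  also have "\<dots> = w b + (\<Sum>x\<in>V - {b}. w x)"
    using sum.remove[OF fin a, of w] by (simp add: ac_simps)
  also have "\<dots> = (\<Sum>x\<in>V. w x)"
    using assms by (simp add: sum.remove[of V b])
  finally show ?thesis .
qed

theorem weighted_turan:
  fixes w :: "'a \<Rightarrow> real"
  assumes "finite V" and "\<forall>x\<in>V. w x \<ge> 0" and "\<not> contains_clique V H (Suc r)"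
  shows "2 * induced_weight w H V \<le> (1 - 1 / real r) * (\<Sum>x\<in>V. w x)\<^sup>2"
  using assms
proof (induction "card V" arbitrary: V w rule: less_induct)
  case less
  show ?case
  proof (cases "\<forall>x\<in>V. \<forall>y\<in>V. x \<noteq> y \<longrightarrow> {x, y} \<in> H")
    case True
    with less.prems show ?thesis
      by (intro weighted_turan_clique card_le_if_clique_free) auto
  next
    case False
    then obtain x y where xy: "x \<in> V" "y \<in> V" "x \<noteq> y" "{x, y} \<notin> H" by auto
    let ?d = "weighted_degree w H (V - {x, y})"
    obtain a b where ab: "a \<in> V" "b \<in> V" "a \<noteq> b" "{a, b} \<notin> H"
      and degree: "weighted_degree w H (V - {a, b}) b \<le> weighted_degree w H (V - {a, b}) a"
    proof (cases "?d y \<le> ?d x")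
      case True
      then show ?thesis using that[of x y] xy by auto
    next
      case False
      moreover have "{y, x} = {x, y}" by blast
      ultimately show ?thesis using that[of y x] xy by simp
    qed
    define w' where "w' = w(a := w a + w b)"
    have "w b \<ge> 0" using less.prems(2) ab by blast
    then have "induced_weight w H V \<le> induced_weight w' H (V - {b})"
      unfolding w'_def by (rule induced_weight_le_merge[OF less.prems(1) ab _ degree])
    then have "2 * induced_weight w H V \<le> 2 * induced_weight w' H (V - {b})" by simp
    also have "\<dots> \<le> (1 - 1 / real r) * (\<Sum>x\<in>V - {b}. w' x)\<^sup>2"
    proof (rule less.hyps)
      show "card (V - {b}) < card V"
        using less.prems(1) \<open>b \<in> V\<close> by (rule card_Diff1_less)
      show "finite (V - {b})" using less.prems(1) by simp
      show "\<forall>x\<in>V - {b}. 0 \<le> w' x"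
        using less.prems(2) ab by (simp add: w'_def)
      show "\<not> contains_clique (V - {b}) H (Suc r)"
        using less.prems(3) by (meson Diff_subset contains_clique_mono)
    qed
    also have "(\<Sum>x\<in>V - {b}. w' x) = (\<Sum>x\<in>V. w x)"
      unfolding w'_def by (rule sum_merge_weight[OF less.prems(1) ab(1-3)])
    finally show ?thesis .
  qed
qed

lemma sum_squares_le_sum_mult_Max:
  fixes w :: "'a \<Rightarrow> real"
  assumes "finite V" and "\<forall>x\<in>V. w x \<ge> 0"
  shows "(\<Sum>x\<in>V. (w x)\<^sup>2) \<le> (\<Sum>x\<in>V. w x) * Max (w ` V)"
proof -
  have "(\<Sum>x\<in>V. (w x)\<^sup>2) \<le> (\<Sum>x\<in>V. w x * Max (w ` V))"
    using assms by (intro sum_mono) (simp add: power2_eq_square mult_left_mono)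
  then show ?thesis by (simp add: sum_distrib_right)
qed

theorem mainTheorem8:
  fixes n l :: nat and w :: "nat \<Rightarrow> real"
  assumes pos: "\<forall>x\<in>{..<n}. w x > 0"
    and l: "l \<ge> 2"
  shows "graph_weight w (complete_edges {..<n})
           - Max {graph_weight w H | H. H \<subseteq> complete_edges {..<n}
                                       \<and> \<not> contains_clique {..<n} H l}
         \<ge> (\<Sum>x<n. w x) / 2 * ((\<Sum>x<n. w x) / (real l - 1) - Max (w ` {..<n}))"
proof -
  define T where "T = {graph_weight w H | H. H \<subseteq> complete_edges {..<n}
                                       \<and> \<not> contains_clique {..<n} H l}"
  let ?S = "\<Sum>x<n. w x"
  have nonneg: "\<forall>x\<in>{..<n}. w x \<ge> 0" using pos less_imp_le by blast
  have l_eq: "l = Suc (l - 1)" and real_l: "real l - 1 = real (l - 1)" using l by auto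
  have complete: "2 * graph_weight w (complete_edges {..<n}) = ?S\<^sup>2 - (\<Sum>x<n. (w x)\<^sup>2)"
    using induced_weight_clique[of "{..<n}" UNIV w] by (simp add: induced_weight_def)
  have "T \<subseteq> graph_weight w ` Pow (complete_edges {..<n})" unfolding T_def by auto
  then have "finite T" by (rule finite_subset) (simp add: finite_complete_edges)
  moreover have "T \<noteq> {}" using not_contains_clique_empty[OF l] unfolding T_def by blast
  moreover have "2 * t \<le> (1 - 1 / real (l - 1)) * ?S\<^sup>2" if "t \<in> T" for t
  proof -
    obtain H where "t = graph_weight w H" "H \<subseteq> complete_edges {..<n}"
      and "\<not> contains_clique {..<n} H (Suc (l - 1))"
      using \<open>t \<in> T\<close> l_eq unfolding T_def by auto
    then show ?thesis
      using weighted_turan[of "{..<n}" w H "l - 1"] nonneg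
      by (simp add: induced_weight_def Int_absorb2)
  qed
  ultimately have "2 * Max T \<le> (1 - 1 / real (l - 1)) * ?S\<^sup>2" by simp
  with complete sum_squares_le_sum_mult_Max[of "{..<n}" w] nonneg
  show ?thesis
    unfolding T_def real_l by (simp add: power2_eq_square algebra_simps)
qed

end
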